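(* Let $\mathcal{G}$ be a MAG and let $H,H'$ be heads with maximal vertex $i$. Suppose $K^m$ is a set with $H\to^{K^m}H'$ such that $K^m\subseteq K$ for every $K$ with $H\to^KH'$. Then for $\emptyset\ne K\subseteq H\setminus\{i\}$, we have $H\to^KH'$ if and only if $K=K^m\,\dot\cup\,B$ for some $B\subseteq H\setminus(H'\cup K^m)$.
   Context: A MAG is an acyclic directed mixed graph (directed and bidirected edges, no directed cycles) with $\mathrm{sib}(v)\cap\mathrm{an}(v)=\emptyset$ for all $v$ and in which every nonadjacent pair is m-separated by some set. Vertices are numbered topologically. $\mathrm{barren}_{\mathcal{G}'}(W)=\{w\in W:\mathrm{de}_{\mathcal{G}'}(w)\cap W=\{w\}\}$; a nonempty $H$ is a head if $\mathrm{barren}(H)=H$ and $H$ lies in one district of $\mathcal{G}_{\mathrm{an}(H)}$. For a head $H$ with maximal vertex $i$ and $\emptyset\ne K\subseteq H\setminus\{i\}$, $H\to^KH'$ means $H'=\mathrm{barren}_{\mathcal{G}'}(\mathrm{dis}_{\mathcal{G}'}(i))$ where $\mathcal{G}'=\mathcal{G}_{\mathrm{an}(H)\setminus K}$. $\dot\cup$ denotes disjoint union. *)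

theory Defs
  imports Main
begin

text \<open>Mixed graphs on natural-number vertices: directed edges (a,b) meaning a \<rightarrow> b,
  bidirected edges stored symmetrically.\<close>

record mixed_graph =
  verts :: "nat set"
  dedges :: "(nat \<times> nat) set"
  bedges :: "(nat \<times> nat) set"

definition induced :: "mixed_graph \<Rightarrow> nat set \<Rightarrow> mixed_graph" where
  "induced G W = \<lparr>verts = verts G \<inter> W, dedges = dedges G \<inter> (W \<times> W),
                   bedges = bedges G \<inter> (W \<times> W)\<rparr>"

definition an :: "mixed_graph \<Rightarrow> nat \<Rightarrow> nat set" where
  "an G v = {u \<in> verts G. (u, v) \<in> (dedges G)\<^sup>*}"

definition an_set :: "mixed_graph \<Rightarrow> nat set \<Rightarrow> nat set" where
  "an_set G W = (\<Union>v\<in>W. an G v)"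

definition de :: "mixed_graph \<Rightarrow> nat \<Rightarrow> nat set" where
  "de G v = {u \<in> verts G. (v, u) \<in> (dedges G)\<^sup>*}"

definition sib :: "mixed_graph \<Rightarrow> nat \<Rightarrow> nat set" where
  "sib G v = {u. (u, v) \<in> bedges G}"

definition dis :: "mixed_graph \<Rightarrow> nat \<Rightarrow> nat set" where
  "dis G v = {u \<in> verts G. (v, u) \<in> (bedges G)\<^sup>*}"

definition barren :: "mixed_graph \<Rightarrow> nat set \<Rightarrow> nat set" where
  "barren G W = {w \<in> W. de G w \<inter> W = {w}}"

definition is_head :: "mixed_graph \<Rightarrow> nat set \<Rightarrow> bool" where
  "is_head G H \<longleftrightarrow> H \<noteq> {} \<and> H \<subseteq> verts G \<and> barren G H = H \<and>
     (\<exists>v \<in> an_set G H. H \<subseteq> dis (induced G (an_set G H)) v)"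

datatype ekind = Fwd | Bwd | Bi

fun edge_ok :: "mixed_graph \<Rightarrow> ekind \<Rightarrow> nat \<Rightarrow> nat \<Rightarrow> bool" where
  "edge_ok G Fwd u v = ((u, v) \<in> dedges G)"
| "edge_ok G Bwd u v = ((v, u) \<in> dedges G)"
| "edge_ok G Bi u v = ((u, v) \<in> bedges G)"

definition valid_path :: "mixed_graph \<Rightarrow> nat list \<Rightarrow> ekind list \<Rightarrow> bool" where
  "valid_path G vs ks \<longleftrightarrow> length vs = Suc (length ks) \<and> distinct vs \<and> set vs \<subseteq> verts G \<and>
     (\<forall>j < length ks. edge_ok G (ks ! j) (vs ! j) (vs ! Suc j))"

text \<open>Internal vertex j (0 < j < length ks) is a collider if both adjacent edges have arrowheads at it.\<close>
definition collider :: "ekind list \<Rightarrow> nat \<Rightarrow> bool" where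
  "collider ks j \<longleftrightarrow> ks ! (j - 1) \<noteq> Bwd \<and> ks ! j \<noteq> Fwd"

definition m_connecting :: "mixed_graph \<Rightarrow> nat set \<Rightarrow> nat \<Rightarrow> nat \<Rightarrow> nat list \<Rightarrow> ekind list \<Rightarrow> bool" where
  "m_connecting G Z a b vs ks \<longleftrightarrow> valid_path G vs ks \<and> hd vs = a \<and> last vs = b \<and>
     (\<forall>j. 0 < j \<and> j < length ks \<longrightarrow>
        (collider ks j \<longrightarrow> vs ! j \<in> an_set G Z) \<and> (\<not> collider ks j \<longrightarrow> vs ! j \<notin> Z))"

definition m_separated :: "mixed_graph \<Rightarrow> nat \<Rightarrow> nat \<Rightarrow> nat set \<Rightarrow> bool" where
  "m_separated G a b Z \<longleftrightarrow> \<not> (\<exists>vs ks. m_connecting G Z a b vs ks)"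

definition adjacent :: "mixed_graph \<Rightarrow> nat \<Rightarrow> nat \<Rightarrow> bool" where
  "adjacent G a b \<longleftrightarrow> (a, b) \<in> dedges G \<or> (b, a) \<in> dedges G \<or> (a, b) \<in> bedges G"

definition topologically_numbered :: "mixed_graph \<Rightarrow> bool" where
  "topologically_numbered G \<longleftrightarrow> (\<forall>(a, b) \<in> dedges G. a < b)"

definition is_MAG :: "mixed_graph \<Rightarrow> bool" where
  "is_MAG G \<longleftrightarrow> finite (verts G) \<and> dedges G \<subseteq> verts G \<times> verts G \<and>
     bedges G \<subseteq> verts G \<times> verts G \<and> sym (bedges G) \<and>
     acyclic (dedges G) \<and>
     (\<forall>v \<in> verts G. sib G v \<inter> an G v = {}) \<and>
     (\<forall>a \<in> verts G. \<forall>b \<in> verts G. a \<noteq> b \<and> \<not> adjacent G a b \<longrightarrow>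
        (\<exists>Z \<subseteq> verts G - {a, b}. m_separated G a b Z))"

definition head_step :: "mixed_graph \<Rightarrow> nat set \<Rightarrow> nat set \<Rightarrow> nat set \<Rightarrow> bool" where
  "head_step G H K H' \<longleftrightarrow>
     (let i = Max H; G' = induced G (an_set G H - K) in
      K \<noteq> {} \<and> K \<subseteq> H - {i} \<and> H' = barren G' (dis G' i))"

end

theory Submission
  imports Defs
begin

text \<open>Every vertex b of a head H is childless in the ancestral graph of H: a child of b that
  is an ancestor of H would give a descendant of b in H other than b, or a directed cycle.
  Deleting childless vertices outside the district D of i changes neither D nor the
  descendant relation inside D, hence not the barren part of D. A childless vertex of D is
  barren in D, so every vertex of H outside H' lies outside D and may be added to K freely;
  conversely K never meets H', and minimality of Km gives Km \<subseteq> K.\<close>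

lemma induced_simps [simp]:
  "verts (induced G W) = verts G \<inter> W"
  "dedges (induced G W) = dedges G \<inter> (W \<times> W)"
  "bedges (induced G W) = bedges G \<inter> (W \<times> W)"
  by (simp_all add: induced_def)

lemma induced_induced: "induced (induced G V) W = induced G (V \<inter> W)"
  by (auto simp: induced_def)

lemma rtrancl_avoiding_childless:
  assumes "(w, u) \<in> R\<^sup>*" and "u \<notin> S" and "S \<inter> Domain R = {}"
  shows "(w, u) \<in> (R \<inter> (- S) \<times> (- S))\<^sup>*"
  using assms(1)
proof (induction rule: converse_rtrancl_induct)
  case base
  show ?case by simp
next
  case (step y z)
  have "y \<notin> S" using step.hyps(1) assms(3) by blast
  moreover have "z \<notin> S"
    using step.hyps(2) assms(2,3) by (cases rule: converse_rtranclE) auto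
  ultimately show ?case using step.hyps(1) step.IH by (simp add: converse_rtrancl_into_rtrancl)
qed

lemma childless_in_barren:
  assumes "w \<in> D" and "w \<in> verts G" and "w \<notin> Domain (dedges G)"
  shows "w \<in> barren G D"
proof -
  have "de G w = {w}"
    using assms(2,3) unfolding de_def by (auto elim: converse_rtranclE)
  then show ?thesis using assms(1) unfolding barren_def by blast
qed

lemma child_of_barren_notin_an_set:
  assumes "acyclic (dedges G)" and "barren G H = H" and "H \<subseteq> verts G"
    and "b \<in> H" and "(b, d) \<in> dedges G"
  shows "d \<notin> an_set G H"
proof
  assume "d \<in> an_set G H"
  then obtain h where h: "h \<in> H" "(d, h) \<in> (dedges G)\<^sup>*"
    unfolding an_set_def an_def by blast
  have bh: "(b, h) \<in> (dedges G)\<^sup>+" using assms(5) h(2) by simp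
  then have "h \<in> de G b \<inter> H" using h(1) assms(3) unfolding de_def by auto
  then have "h = b" using assms(2,4) unfolding barren_def by blast
  then show False using bh assms(1) unfolding acyclic_def by blast
qed

lemma dis_induced_Compl:
  assumes "bedges G \<subseteq> verts G \<times> verts G" and "S \<inter> dis G v = {}"
  shows "dis (induced G (- S)) v = dis G v"
proof
  show "dis (induced G (- S)) v \<subseteq> dis G v"
    unfolding dis_def by (auto elim: rtrancl_mono[THEN subsetD, rotated])
next
  have "(v, u) \<in> (bedges G \<inter> (- S) \<times> (- S))\<^sup>*" if "(v, u) \<in> (bedges G)\<^sup>*" for u
    using that
  proof (induction rule: rtrancl_induct)
    case base
    show ?case by simp
  next
    case (step y z)
    have "y \<in> dis G v" "z \<in> dis G v"
      using step.hyps assms(1) unfolding dis_def by auto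
    then have "(y, z) \<in> bedges G \<inter> (- S) \<times> (- S)" using step.hyps(2) assms(2) by blast
    with step.IH show ?case by (rule rtrancl_into_rtrancl)
  qed
  then show "dis G v \<subseteq> dis (induced G (- S)) v"
    using assms(2) unfolding dis_def by auto
qed

lemma barren_induced_Compl:
  assumes "S \<inter> Domain (dedges G) = {}" and "D \<inter> S = {}"
  shows "barren (induced G (- S)) D = barren G D"
proof -
  have "de (induced G (- S)) w \<inter> D = de G w \<inter> D" for w
  proof
    show "de (induced G (- S)) w \<inter> D \<subseteq> de G w \<inter> D"
      unfolding de_def by (auto elim: rtrancl_mono[THEN subsetD, rotated])
    show "de G w \<inter> D \<subseteq> de (induced G (- S)) w \<inter> D"
      using assms rtrancl_avoiding_childless[of w _ "dedges G" S] unfolding de_def by auto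
  qed
  then show ?thesis unfolding barren_def by auto
qed

lemma head_step_target_disjoint: "head_step G H K H' \<Longrightarrow> H' \<inter> K = {}"
  unfolding head_step_def Let_def barren_def dis_def by auto

lemma head_step_Un:
  assumes "bedges G \<subseteq> verts G \<times> verts G" and "acyclic (dedges G)"
    and "barren G H = H" and "H \<subseteq> verts G"
    and "head_step G H K H'" and "B \<subseteq> H - H'" and "K \<union> B \<subseteq> H - {Max H}"
  shows "head_step G H (K \<union> B) H'"
proof -
  define i where "i = Max H"
  define G1 where "G1 = induced G (an_set G H - K)"
  have H': "H' = barren G1 (dis G1 i)"
    using assms(5) unfolding head_step_def Let_def G1_def i_def by simp
  have childless: "B \<inter> Domain (dedges G1) = {}"
    using assms(6) child_of_barren_notin_an_set[OF assms(2-4)] unfolding G1_def by fastforce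
  have "B \<inter> dis G1 i = {}"
  proof -
    have "b \<in> H'" if "b \<in> B" "b \<in> dis G1 i" for b
      using that childless childless_in_barren[of b "dis G1 i" G1] H'
      unfolding dis_def by blast
    then show ?thesis using assms(6) by blast
  qed
  moreover have "bedges G1 \<subseteq> verts G1 \<times> verts G1"
    using assms(1) unfolding G1_def by auto
  ultimately have "dis (induced G1 (- B)) i = dis G1 i"
    and "barren (induced G1 (- B)) (dis G1 i) = barren G1 (dis G1 i)"
    using dis_induced_Compl barren_induced_Compl[OF childless] by blast+
  moreover have "induced G1 (- B) = induced G (an_set G H - (K \<union> B))"
    unfolding G1_def induced_induced by (simp add: Diff_eq Int_assoc)
  ultimately show ?thesis
    using H' assms(5,7) unfolding head_step_def Let_def i_def by auto
qed

theorem lemmaC3: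
  fixes G :: mixed_graph and H H' Km :: "nat set" and i :: nat
  assumes "is_MAG G" and "topologically_numbered G"
    and "is_head G H" and "is_head G H'"
    and "Max H = i" and "Max H' = i"
    and "head_step G H Km H'"
    and "\<forall>K. head_step G H K H' \<longrightarrow> Km \<subseteq> K"
  shows "\<forall>K. K \<noteq> {} \<and> K \<subseteq> H - {i} \<longrightarrow>
           (head_step G H K H' \<longleftrightarrow>
             (\<exists>B. B \<subseteq> H - (H' \<union> Km) \<and> Km \<inter> B = {} \<and> K = Km \<union> B))"
proof (intro allI impI)
  fix K
  assume K: "K \<noteq> {} \<and> K \<subseteq> H - {i}"
  show "head_step G H K H' \<longleftrightarrow> (\<exists>B. B \<subseteq> H - (H' \<union> Km) \<and> Km \<inter> B = {} \<and> K = Km \<union> B)"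
  proof
    assume "head_step G H K H'"
    then have "Km \<subseteq> K" and "H' \<inter> K = {}"
      using assms(8) head_step_target_disjoint by blast+
    then show "\<exists>B. B \<subseteq> H - (H' \<union> Km) \<and> Km \<inter> B = {} \<and> K = Km \<union> B"
      using K by (intro exI[of _ "K - Km"]) auto
  next
    assume "\<exists>B. B \<subseteq> H - (H' \<union> Km) \<and> Km \<inter> B = {} \<and> K = Km \<union> B"
    then obtain B where "B \<subseteq> H - H'" and "K = Km \<union> B" by blast
    moreover have "bedges G \<subseteq> verts G \<times> verts G" and "acyclic (dedges G)"
      using assms(1) unfolding is_MAG_def by auto
    moreover have "barren G H = H" and "H \<subseteq> verts G"
      using assms(3) unfolding is_head_def by auto
    ultimately show "head_step G H K H'"
      using head_step_Un[of G H Km H' B] assms(5,7) K by blast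
  qed
qed

end
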